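(* Let $A$ be a circular $m\times n$ matrix, $b\in\mathbb{Z}_+^m$ and $x^*\in Q(A,b)$ such that every circuit in $D(A,x^* )$ has non-negative cost. Then $x^*\in Q^*(A,b)$.
   Context: Notation: $[n]=\{1,\dots,n\}$ with addition mod $n$ (index $0$ identified with $n$); for $a,c\in[n]$ with $t\ge0$ minimal such that $a+t\equiv c\pmod n$, $[a,c)_n=\{a,\dots,a+t-1\}$ (mod $n$). An $m\times n$ $\{0,1\}$-matrix $A$ is circular if for each row $i$ there are $\ell_i\in[n]$ and an integer $2\le k_i\le n-1$ with row $i$ the incidence vector of $[\ell_i,\ell_i+k_i)_n$. $Q(A,b)=\{x\ge0:Ax\ge b\}$, $Q^*(A,b)=\operatorname{conv}(Q(A,b)\cap\mathbb{Z}^n)$. $D(A)$: digraph (multigraph allowed) on node set $[n]$ (labels mod $n$) with forward arcs $a_i=(\ell_i-1,\ell_i+k_i-1)$ ($i\in[m]$) and $a_{m+j}=(j-1,j)$ ($j\in[n]$), and reverse arcs $\bar a_i=(\ell_i+k_i-1,\ell_i-1)$ ($i\in[m]$) and $\bar a_{m+j}=(j,j-1)$ ($j\in[n]$). A circuit is a simple directed circuit. Costs: $\tilde A=\binom{A}{I}\in\{0,1\}^{(m+n)\times n}$ ($I$ the $n\times n$ identity), $d=\binom{b}{0}\in\mathbb{Z}^{m+n}$, $v$ = last column of $\tilde A$. For $x^*\in Q(A,b)$: $s^*=\tilde Ax^*-d$, $\mu=\lceil\mathbf{1}^Tx^*\rceil-\mathbf{1}^Tx^*$, $c^+(x^* )=\mu(s^*-(1-\mu)v)$,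 $c^-(x^* )=(1-\mu)(s^*+\mu v)$. $D(A,x^* )$ is $D(A)$ where arc $a_k$ ($k\in[m+n]$) has cost $c^+_k(x^* )$ and arc $\bar a_k$ has cost $c^-_k(x^* )$; the cost of a path is the sum of the costs of its arcs. *)

theory Defs
  imports Complex_Main
begin

text \<open>Rows of A are indexed by 1..m, columns by 1..n. A matrix is a function
  A :: nat => nat => int (only entries with i in 1..m, j in 1..n matter); vectors are
  functions on the index set. Nodes of D(A) are the residues 0..n-1 (label n identified with 0).\<close>

text \<open>Row i of A is the incidence vector of the circular interval [l_i, l_i + k_i)_n:
  column j belongs to it iff (j - l_i) mod n < k_i.\<close>
definition circular_rep ::
  "nat \<Rightarrow> nat \<Rightarrow> (nat \<Rightarrow> nat \<Rightarrow> int) \<Rightarrow> (nat \<Rightarrow> nat) \<Rightarrow> (nat \<Rightarrow> nat) \<Rightarrow> bool" where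
  "circular_rep m n A l k \<longleftrightarrow>
     (\<forall>i\<in>{1..m}. l i \<in> {1..n} \<and> 2 \<le> k i \<and> k i \<le> n - 1 \<and>
        (\<forall>j\<in>{1..n}. A i j = (if (j + n - l i) mod n < k i then 1 else 0)))"

definition inQ :: "nat \<Rightarrow> nat \<Rightarrow> (nat \<Rightarrow> nat \<Rightarrow> int) \<Rightarrow> (nat \<Rightarrow> int) \<Rightarrow> (nat \<Rightarrow> real) \<Rightarrow> bool" where
  "inQ m n A b x \<longleftrightarrow> (\<forall>j\<in>{1..n}. 0 \<le> x j) \<and>
     (\<forall>i\<in>{1..m}. (\<Sum>j=1..n. real_of_int (A i j) * x j) \<ge> real_of_int (b i))"

text \<open>Q*(A,b): convex hull of the integer points of Q(A,b), written out as convex combinations.\<close>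
definition inQstar :: "nat \<Rightarrow> nat \<Rightarrow> (nat \<Rightarrow> nat \<Rightarrow> int) \<Rightarrow> (nat \<Rightarrow> int) \<Rightarrow> (nat \<Rightarrow> real) \<Rightarrow> bool" where
  "inQstar m n A b x \<longleftrightarrow>
     (\<exists>(N::nat) (p :: nat \<Rightarrow> nat \<Rightarrow> int) (w :: nat \<Rightarrow> real).
        (\<forall>t<N. 0 \<le> w t \<and> inQ m n A b (\<lambda>j. real_of_int (p t j))) \<and>
        (\<Sum>t<N. w t) = 1 \<and>
        (\<forall>j\<in>{1..n}. x j = (\<Sum>t<N. w t * real_of_int (p t j))))"

text \<open>Arcs of D(A): (e, True) is the forward arc a_e, (e, False) the reverse arc of a_e,
  for e in 1..m+n.\<close>
type_synonym arc = "nat \<times> bool"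

definition arc_valid :: "nat \<Rightarrow> nat \<Rightarrow> arc \<Rightarrow> bool" where
  "arc_valid m n a \<longleftrightarrow> fst a \<in> {1..m+n}"

definition fwd_tail :: "nat \<Rightarrow> nat \<Rightarrow> (nat \<Rightarrow> nat) \<Rightarrow> (nat \<Rightarrow> nat) \<Rightarrow> nat \<Rightarrow> nat" where
  "fwd_tail m n l k e = (if e \<le> m then (l e - 1) mod n else (e - m - 1) mod n)"

definition fwd_head :: "nat \<Rightarrow> nat \<Rightarrow> (nat \<Rightarrow> nat) \<Rightarrow> (nat \<Rightarrow> nat) \<Rightarrow> nat \<Rightarrow> nat" where
  "fwd_head m n l k e = (if e \<le> m then (l e + k e - 1) mod n else (e - m) mod n)"

definition arc_tail :: "nat \<Rightarrow> nat \<Rightarrow> (nat \<Rightarrow> nat) \<Rightarrow> (nat \<Rightarrow> nat) \<Rightarrow> arc \<Rightarrow> nat" where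
  "arc_tail m n l k a = (if snd a then fwd_tail m n l k (fst a) else fwd_head m n l k (fst a))"

definition arc_head :: "nat \<Rightarrow> nat \<Rightarrow> (nat \<Rightarrow> nat) \<Rightarrow> (nat \<Rightarrow> nat) \<Rightarrow> arc \<Rightarrow> nat" where
  "arc_head m n l k a = (if snd a then fwd_head m n l k (fst a) else fwd_tail m n l k (fst a))"

definition is_circuit :: "nat \<Rightarrow> nat \<Rightarrow> (nat \<Rightarrow> nat) \<Rightarrow> (nat \<Rightarrow> nat) \<Rightarrow> arc list \<Rightarrow> bool" where
  "is_circuit m n l k cs \<longleftrightarrow> cs \<noteq> [] \<and> (\<forall>a\<in>set cs. arc_valid m n a) \<and>
     (\<forall>t<length cs. arc_head m n l k (cs ! t) = arc_tail m n l k (cs ! ((t + 1) mod length cs))) \<and>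
     distinct (map (arc_tail m n l k) cs)"

text \<open>s* = (A;I) x - (b;0), indexed by 1..m+n.\<close>
definition slack :: "nat \<Rightarrow> nat \<Rightarrow> (nat \<Rightarrow> nat \<Rightarrow> int) \<Rightarrow> (nat \<Rightarrow> int) \<Rightarrow> (nat \<Rightarrow> real) \<Rightarrow> nat \<Rightarrow> real" where
  "slack m n A b x r = (if r \<le> m then (\<Sum>j=1..n. real_of_int (A r j) * x j) - real_of_int (b r)
                        else x (r - m))"

definition lastcol :: "nat \<Rightarrow> nat \<Rightarrow> (nat \<Rightarrow> nat \<Rightarrow> int) \<Rightarrow> nat \<Rightarrow> real" where
  "lastcol m n A r = (if r \<le> m then real_of_int (A r n) else (if r - m = n then 1 else 0))"

definition mu :: "nat \<Rightarrow> (nat \<Rightarrow> real) \<Rightarrow> real" where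
  "mu n x = real_of_int \<lceil>\<Sum>j=1..n. x j\<rceil> - (\<Sum>j=1..n. x j)"

definition cplus :: "nat \<Rightarrow> nat \<Rightarrow> (nat \<Rightarrow> nat \<Rightarrow> int) \<Rightarrow> (nat \<Rightarrow> int) \<Rightarrow> (nat \<Rightarrow> real) \<Rightarrow> nat \<Rightarrow> real" where
  "cplus m n A b x r = mu n x * (slack m n A b x r - (1 - mu n x) * lastcol m n A r)"

definition cminus :: "nat \<Rightarrow> nat \<Rightarrow> (nat \<Rightarrow> nat \<Rightarrow> int) \<Rightarrow> (nat \<Rightarrow> int) \<Rightarrow> (nat \<Rightarrow> real) \<Rightarrow> nat \<Rightarrow> real" where
  "cminus m n A b x r = (1 - mu n x) * (slack m n A b x r + mu n x * lastcol m n A r)"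

definition arc_cost :: "nat \<Rightarrow> nat \<Rightarrow> (nat \<Rightarrow> nat \<Rightarrow> int) \<Rightarrow> (nat \<Rightarrow> int) \<Rightarrow> (nat \<Rightarrow> real) \<Rightarrow> arc \<Rightarrow> real" where
  "arc_cost m n A b x a = (if snd a then cplus m n A b x (fst a) else cminus m n A b x (fst a))"

end

theory Submission
  imports Defs
begin

(* If the coordinate sum of x is an integer K, then x is an average of integer points of Q(A,b):
   round its prefix sums Y j to the integers ceil (Y j - tau), tau in [0, 1), and average over tau.
   Since every row of A is a circular interval, every constraint of (A;I) reads
   Y head - Y tail + v * K >= c with v, c integers, and such constraints survive the rounding.
   Otherwise let mu = ceil (1^T x) - 1^T x. Nonnegative circuits in D(A,x) yield a potential on the
   nodes, hence a direction d with 1^T d = 1 such that x - (1 - mu) d and x + mu d still lie in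
   Q(A,b): the forward and reverse arc of each row bound the potential difference from both sides
   exactly as needed. Their coordinate sums are the integers ceil (1^T x) - 1 and ceil (1^T x), and
   x is their convex combination with weights mu and 1 - mu. *)

fun walk :: "('a \<Rightarrow> 'v) \<Rightarrow> ('a \<Rightarrow> 'v) \<Rightarrow> 'v \<Rightarrow> 'a list \<Rightarrow> 'v \<Rightarrow> bool" where
  "walk T H u [] v \<longleftrightarrow> u = v"
| "walk T H u (a # ps) v \<longleftrightarrow> T a = u \<and> walk T H (H a) ps v"

lemma walk_append: "walk T H u (ps @ qs) v \<longleftrightarrow> (\<exists>w. walk T H u ps w \<and> walk T H w qs v)"
  by (induction ps arbitrary: u) auto

lemma walk_snoc: "walk T H u (ps @ [a]) v \<longleftrightarrow> walk T H u ps (T a) \<and> H a = v"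
  by (auto simp: walk_append)

lemma walk_hd: "walk T H u ps v \<Longrightarrow> ps \<noteq> [] \<Longrightarrow> T (hd ps) = u"
  by (cases ps) auto

lemma walk_last: "walk T H u ps v \<Longrightarrow> ps \<noteq> [] \<Longrightarrow> H (last ps) = v"
  by (induction ps arbitrary: u) auto

lemma walk_nth: "walk T H u ps v \<Longrightarrow> Suc t < length ps \<Longrightarrow> H (ps ! t) = T (ps ! Suc t)"
proof (induction ps arbitrary: u t)
  case (Cons a ps)
  then show ?case
    by (cases t) (auto simp: hd_conv_nth dest: walk_hd)
qed simp

lemma walk_split_nth:
  assumes "walk T H u ps v" "i < length ps"
  shows "walk T H u (take i ps) (T (ps ! i))" "walk T H (T (ps ! i)) (drop i ps) v"
proof -
  obtain w where "walk T H u (take i ps) w" "walk T H w (drop i ps) v"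
    using assms(1) walk_append by (metis append_take_drop_id)
  moreover have "w = T (ps ! i)"
    using walk_hd[OF calculation(2)] assms(2) by (simp add: hd_drop_conv_nth)
  ultimately show "walk T H u (take i ps) (T (ps ! i))" "walk T H (T (ps ! i)) (drop i ps) v"
    by simp_all
qed

lemma closed_walk_nth:
  assumes "walk T H u ps u" "ps \<noteq> []" "t < length ps"
  shows "H (ps ! t) = T (ps ! ((t + 1) mod length ps))"
proof (cases "Suc t < length ps")
  case True
  then show ?thesis using walk_nth[OF assms(1)] by simp
next
  case False
  then have "t = length ps - 1" using assms(3) by simp
  then show ?thesis
    using walk_last[OF assms(1,2)] walk_hd[OF assms(1,2)] assms(2)
    by (simp add: hd_conv_nth last_conv_nth)
qed

definition nonneg_cycles :: "('a \<Rightarrow> 'v) \<Rightarrow> ('a \<Rightarrow> 'v) \<Rightarrow> 'a set \<Rightarrow> ('a \<Rightarrow> real) \<Rightarrow> bool" where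
  "nonneg_cycles T H E c \<longleftrightarrow> (\<forall>u cs. cs \<noteq> [] \<and> set cs \<subseteq> E \<and> walk T H u cs u \<and> distinct (map T cs)
      \<longrightarrow> 0 \<le> sum_list (map c cs))"

lemma nonneg_cyclesD:
  "nonneg_cycles T H E c \<Longrightarrow> cs \<noteq> [] \<Longrightarrow> set cs \<subseteq> E \<Longrightarrow> walk T H u cs u
    \<Longrightarrow> distinct (map T cs) \<Longrightarrow> 0 \<le> sum_list (map c cs)"
  unfolding nonneg_cycles_def by blast

definition simple_walks_to :: "('a \<Rightarrow> 'v) \<Rightarrow> ('a \<Rightarrow> 'v) \<Rightarrow> 'a set \<Rightarrow> 'v \<Rightarrow> 'a list set" where
  "simple_walks_to T H E v =
     {ps. set ps \<subseteq> E \<and> (\<exists>u. walk T H u ps v) \<and> distinct (map T ps) \<and> v \<notin> T ` set ps}"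

lemma finite_simple_walks_to:
  assumes "finite E"
  shows "finite (simple_walks_to T H E v)"
proof -
  have "simple_walks_to T H E v \<subseteq> {ps. set ps \<subseteq> E \<and> length ps \<le> card (T ` E)}"
  proof
    fix ps assume "ps \<in> simple_walks_to T H E v"
    then have sub: "set ps \<subseteq> E" and dist: "distinct (map T ps)"
      by (simp_all add: simple_walks_to_def)
    have "length ps = card (set (map T ps))"
      using dist by (metis distinct_card length_map list.set_map)
    also have "\<dots> \<le> card (T ` E)"
      using sub assms by (intro card_mono) auto
    finally show "ps \<in> {ps. set ps \<subseteq> E \<and> length ps \<le> card (T ` E)}"
      using sub by simp
  qed
  then show ?thesis
    using finite_lists_length_le[OF assms] finite_subset by blast
qed

lemma simple_walks_to_take_drop:
  assumes ps: "ps \<in> simple_walks_to T H E v" and i: "i < length ps"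
  shows "take i ps \<in> simple_walks_to T H E (T (ps ! i))" "drop i ps \<in> simple_walks_to T H E v"
proof -
  obtain u where walk: "walk T H u ps v" and sub: "set ps \<subseteq> E"
    and "distinct (map T ps)" and fresh: "v \<notin> T ` set ps"
    using ps by (auto simp: simple_walks_to_def)
  then have dist: "distinct (map T (take i ps) @ map T (drop i ps))"
    by (metis append_take_drop_id map_append)
  have "ps ! i \<in> set (drop i ps)"
    using i by (metis Cons_nth_drop_Suc list.set_intros(1))
  then have "T (ps ! i) \<notin> T ` set (take i ps)"
    using dist by auto
  then show "take i ps \<in> simple_walks_to T H E (T (ps ! i))"
    using walk_split_nth(1)[OF walk i] sub set_take_subset[of i ps] dist
    unfolding simple_walks_to_def by auto
  show "drop i ps \<in> simple_walks_to T H E v"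
    using walk_split_nth(2)[OF walk i] sub set_drop_subset[of i ps] dist fresh
    unfolding simple_walks_to_def by auto
qed

lemma simple_walk_extend:
  fixes c :: "'a \<Rightarrow> real"
  assumes cycles: "nonneg_cycles T H E c"
    and a: "a \<in> E" and ps: "ps \<in> simple_walks_to T H E (T a)"
  shows "\<exists>qs\<in>simple_walks_to T H E (H a). sum_list (map c qs) \<le> sum_list (map c ps) + c a"
proof -
  obtain u where walk: "walk T H u ps (T a)" and sub: "set ps \<subseteq> E"
    and dist: "distinct (map T ps)" and fresh: "T a \<notin> T ` set ps"
    using ps by (auto simp: simple_walks_to_def)
  consider "H a \<notin> T ` set ps" "H a \<noteq> T a" | "H a = T a" | "H a \<in> T ` set ps"
    by blast
  then show ?thesis
  proof cases
    case 1
    then have "ps @ [a] \<in> simple_walks_to T H E (H a)"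
      using sub a walk dist fresh by (auto simp: simple_walks_to_def walk_snoc)
    then show ?thesis by force
  next
    case 2
    have "0 \<le> sum_list (map c [a])"
      using nonneg_cyclesD[OF cycles, of "[a]" "T a"] a 2 by simp
    then show ?thesis using ps 2 by force
  next
    case 3
    \<comment> \<open>The walk revisits the head of a: cut off the closed walk through a.\<close>
    then obtain i where i: "i < length ps" "T (ps ! i) = H a"
      by (metis image_iff in_set_conv_nth)
    note parts = simple_walks_to_take_drop[OF ps i(1), unfolded i(2)]
    have "walk T H (H a) (drop i ps @ [a]) (H a)"
      using walk_split_nth(2)[OF walk i(1)] i(2) by (simp add: walk_snoc)
    moreover have "set (drop i ps @ [a]) \<subseteq> E" "distinct (map T (drop i ps @ [a]))"
      using parts(2) a unfolding simple_walks_to_def by auto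
    ultimately have "0 \<le> sum_list (map c (drop i ps @ [a]))"
      by (intro nonneg_cyclesD[OF cycles]) simp_all
    moreover note parts(1)
    moreover have "sum_list (map c ps) = sum_list (map c (take i ps)) + sum_list (map c (drop i ps))"
      by (metis append_take_drop_id map_append sum_list_append)
    ultimately show ?thesis by force
  qed
qed

text \<open>The potential of v is the least cost of a simple walk ending in v.\<close>
lemma potential_of_nonneg_cycles:
  fixes c :: "'a \<Rightarrow> real"
  assumes "finite E"
    and cycles: "nonneg_cycles T H E c"
  obtains \<phi> where "\<And>a. a \<in> E \<Longrightarrow> \<phi> (H a) \<le> \<phi> (T a) + c a"
proof -
  define \<phi> where "\<phi> v = Min ((\<lambda>ps. sum_list (map c ps)) ` simple_walks_to T H E v)" for v
  have fin: "finite ((\<lambda>ps. sum_list (map c ps)) ` simple_walks_to T H E v)" for v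
    using finite_simple_walks_to[OF assms(1)] by (rule finite_imageI)
  have "[] \<in> simple_walks_to T H E v" for v
    by (simp add: simple_walks_to_def)
  then have attained: "\<exists>ps\<in>simple_walks_to T H E v. \<phi> v = sum_list (map c ps)" for v
    unfolding \<phi>_def using Min_in[OF fin] by blast
  show ?thesis
  proof (rule that)
    fix a assume a: "a \<in> E"
    obtain ps where ps: "ps \<in> simple_walks_to T H E (T a)" "\<phi> (T a) = sum_list (map c ps)"
      using attained by blast
    obtain qs where qs: "qs \<in> simple_walks_to T H E (H a)"
      and le: "sum_list (map c qs) \<le> sum_list (map c ps) + c a"
      using simple_walk_extend[OF cycles a ps(1)] by blast
    have "\<phi> (H a) \<le> sum_list (map c qs)"
      unfolding \<phi>_def using Min_le[OF fin] qs by blast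
    then show "\<phi> (H a) \<le> \<phi> (T a) + c a"
      using le ps(2) by linarith
  qed
qed

definition prefix_sum :: "(nat \<Rightarrow> real) \<Rightarrow> nat \<Rightarrow> real" where
  "prefix_sum w j = (\<Sum>q=1..j. w q)"

lemma prefix_sum_0 [simp]: "prefix_sum w 0 = 0"
  by (simp add: prefix_sum_def)

lemma prefix_sum_Suc [simp]: "prefix_sum w (Suc j) = prefix_sum w j + w (Suc j)"
  by (simp add: prefix_sum_def)

lemma prefix_sum_diff: "1 \<le> j \<Longrightarrow> prefix_sum w j - prefix_sum w (j - 1) = w j"
  by (cases j) simp_all

lemma prefix_sum_add_scaled:
  "prefix_sum (\<lambda>j. w j + c * u j) j = prefix_sum w j + c * prefix_sum u j"
  by (simp add: prefix_sum_def sum.distrib sum_distrib_left)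

lemma sum_atLeastAtMost_prefix_sum:
  assumes "1 \<le> L" "L \<le> h + 1"
  shows "(\<Sum>j=L..h. w j) = prefix_sum w h - prefix_sum w (L - 1)"
proof -
  have "{1..h} = {1..L - 1} \<union> {L..h}" using assms by auto
  then have "prefix_sum w h = prefix_sum w (L - 1) + (\<Sum>j=L..h. w j)"
    unfolding prefix_sum_def by (simp add: sum.union_disjoint)
  then show ?thesis by simp
qed

lemma add_diff_mod_cases:
  fixes j n L :: nat
  assumes "1 \<le> j" "j \<le> n" "1 \<le> L" "L \<le> n"
  shows "(j + n - L) mod n = (if L \<le> j then j - L else j + n - L)"
proof (cases "L \<le> j")
  case True
  then have "(j + n - L) mod n = (j - L) mod n"
    by (metis Nat.add_diff_assoc2 mod_add_self2)
  also have "\<dots> = j - L" using assms by (intro mod_less) linarith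
  finally show ?thesis using True by simp
qed (use assms in simp)

text \<open>The interval [L, L + K)_n wraps around exactly when it contains n.\<close>
lemma circular_interval_sum:
  fixes w :: "nat \<Rightarrow> real"
  assumes L: "1 \<le> L" "L \<le> n" and K: "K < n"
  shows "(\<Sum>j=1..n. if (j + n - L) mod n < K then w j else 0)
       = prefix_sum w ((L + K - 1) mod n) - prefix_sum w (L - 1)
         + (if n \<le> L + K - 1 then prefix_sum w n else 0)"
proof -
  let ?S = "{j\<in>{1..n}. (j + n - L) mod n < K}"
  have sum_S: "(\<Sum>j=1..n. if (j + n - L) mod n < K then w j else 0) = (\<Sum>j\<in>?S. w j)"
    by (rule sum.inter_filter[symmetric]) simp
  have mod: "(j + n - L) mod n = (if L \<le> j then j - L else j + n - L)" if "j \<in> {1..n}" for j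
    using add_diff_mod_cases[of j n L] L that by simp
  show ?thesis
  proof (cases "n \<le> L + K - 1")
    case False
    have "?S = {L..L + K - 1}"
    proof (rule set_eqI)
      fix j show "j \<in> ?S \<longleftrightarrow> j \<in> {L..L + K - 1}"
        using mod[of j] L K False by (cases "j \<in> {1..n}"; cases "L \<le> j") auto
    qed
    then show ?thesis
      using False L sum_S sum_atLeastAtMost_prefix_sum[of L "L + K - 1" w] by simp
  next
    case True
    have wrap: "(L + K - 1) mod n = L + K - 1 - n"
      using True L K by (simp add: le_mod_geq)
    have "?S = {L..n} \<union> {1..L + K - 1 - n}"
    proof (rule set_eqI)
      fix j show "j \<in> ?S \<longleftrightarrow> j \<in> {L..n} \<union> {1..L + K - 1 - n}"
        using mod[of j] L K True by (cases "j \<in> {1..n}"; cases "L \<le> j") auto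
    qed
    moreover have "{L..n} \<inter> {1..L + K - 1 - n} = {}" using L K by auto
    ultimately have "(\<Sum>j\<in>?S. w j) = (\<Sum>j=L..n. w j) + prefix_sum w (L + K - 1 - n)"
      by (simp add: sum.union_disjoint prefix_sum_def)
    also have "(\<Sum>j=L..n. w j) = prefix_sum w n - prefix_sum w (L - 1)"
      using L by (intro sum_atLeastAtMost_prefix_sum) simp_all
    finally show ?thesis
      unfolding sum_S wrap using True by simp
  qed
qed

lemma circular_rep_pos:
  assumes "circular_rep m n A l k" "r \<in> {1..m+n}"
  shows "0 < n"
  using assms by (cases "r \<le> m") (auto simp: circular_rep_def)

lemma circular_rep_row:
  assumes "circular_rep m n A l k" "i \<in> {1..m}"
  shows "1 \<le> l i" "l i \<le> n" "k i < n"
    "j \<in> {1..n} \<Longrightarrow> A i j = (if (j + n - l i) mod n < k i then 1 else 0)"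
proof -
  have "l i \<in> {1..n} \<and> k i \<le> n - 1 \<and>
      (\<forall>j\<in>{1..n}. A i j = (if (j + n - l i) mod n < k i then 1 else 0))"
    using assms unfolding circular_rep_def by blast
  then show "1 \<le> l i" "l i \<le> n" "k i < n"
    "j \<in> {1..n} \<Longrightarrow> A i j = (if (j + n - l i) mod n < k i then 1 else 0)"
    by auto
qed

lemma circular_rep_lastcol:
  assumes "circular_rep m n A l k" "i \<in> {1..m}"
  shows "A i n = (if n \<le> l i + k i - 1 then 1 else 0)"
  using circular_rep_row[OF assms] add_diff_mod_cases[of n n "l i"] by auto

lemma lastcol_of_int:
  "lastcol m n A r = of_int (if r \<le> m then A r n else if r - m = n then 1 else 0)"
  by (simp add: lastcol_def)

lemma slack_eq_prefix_sums:
  assumes cr: "circular_rep m n A l k" and r: "r \<in> {1..m+n}"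
  shows "slack m n A b w r
       = prefix_sum w (fwd_head m n l k r) - prefix_sum w (fwd_tail m n l k r)
         + lastcol m n A r * prefix_sum w n - (if r \<le> m then of_int (b r) else 0)"
proof (cases "r \<le> m")
  case True
  then have r': "r \<in> {1..m}" using r by simp
  note row = circular_rep_row[OF cr r']
  have "(\<Sum>j=1..n. real_of_int (A r j) * w j) = (\<Sum>j=1..n. if (j + n - l r) mod n < k r then w j else 0)"
    using row(4) by (intro sum.cong) simp_all
  also have "\<dots> = prefix_sum w (fwd_head m n l k r) - prefix_sum w (fwd_tail m n l k r)
         + lastcol m n A r * prefix_sum w n"
    using circular_interval_sum[OF row(1-3)] row(1,2) True circular_rep_lastcol[OF cr r']
    by (simp add: fwd_head_def fwd_tail_def lastcol_def)
  finally show ?thesis using True by (simp add: slack_def)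
next
  case False
  then obtain j where j: "r = m + j" "1 \<le> j" "j \<le> n"
    using r by (intro that[of "r - m"]) auto
  then show ?thesis
    using False prefix_sum_diff[of j w]
    by (cases "j = n") (auto simp: slack_def fwd_head_def fwd_tail_def lastcol_def)
qed

lemma inQ_iff_slack_nonneg:
  "inQ m n A b z \<longleftrightarrow> (\<forall>r\<in>{1..m+n}. 0 \<le> slack m n A b z r)"
proof
  assume "inQ m n A b z"
  then show "\<forall>r\<in>{1..m+n}. 0 \<le> slack m n A b z r"
    unfolding inQ_def slack_def by (auto simp: not_le)
next
  assume slack: "\<forall>r\<in>{1..m+n}. 0 \<le> slack m n A b z r"
  show "inQ m n A b z"
    unfolding inQ_def
  proof (intro conjI ballI)
    fix j assume "j \<in> {1..n}"
    then show "0 \<le> z j" using slack[rule_format, of "m + j"] by (simp add: slack_def)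
  next
    fix i assume "i \<in> {1..m}"
    then show "real_of_int (b i) \<le> (\<Sum>j=1..n. real_of_int (A i j) * z j)"
      using slack[rule_format, of i] by (simp add: slack_def)
  qed
qed

lemma ceiling_diff_frac:
  fixes y \<tau> :: real
  assumes "0 \<le> \<tau>" "\<tau> < 1"
  shows "\<lceil>y - \<tau>\<rceil> = \<lfloor>y\<rfloor> + (if \<tau> < frac y then 1 else 0)"
proof -
  have "\<lceil>frac y - \<tau>\<rceil> = (if \<tau> < frac y then 1 else 0)"
  proof (cases "\<tau> < frac y")
    case True
    then show ?thesis using assms frac_lt_1[of y] by (simp add: ceiling_eq_iff)
  next
    case False
    have "- 1 < frac y - \<tau>" "frac y - \<tau> \<le> 0"
      using False assms frac_ge_0[of y] by linarith+
    then show ?thesis using False by (simp add: ceiling_eq_iff)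
  qed
  moreover have "y - \<tau> = (frac y - \<tau>) + of_int \<lfloor>y\<rfloor>"
    by (simp add: frac_def)
  ultimately show ?thesis
    by (simp only: ceiling_add_of_int)
qed

definition unit_partition :: "nat \<Rightarrow> (nat \<Rightarrow> real) \<Rightarrow> bool" where
  "unit_partition N t \<longleftrightarrow> (\<forall>s r. s < r \<longrightarrow> r \<le> N \<longrightarrow> t s < t r) \<and> t 0 = 0 \<and> t N = 1"

lemma unit_partition_less:
  "unit_partition N t \<Longrightarrow> s < r \<Longrightarrow> r \<le> N \<Longrightarrow> t s < t r"
  by (simp add: unit_partition_def)

lemma unit_partition_range:
  assumes "unit_partition N t" "s < N"
  shows "0 \<le> t s" "t s < 1"
  using assms unit_partition_less[OF assms(1), of 0 s] unit_partition_less[OF assms(1), of s N]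
  by (cases s; simp add: unit_partition_def)+

lemma unit_partition_sum_lengths:
  "unit_partition N t \<Longrightarrow> (\<Sum>s<N. t (Suc s) - t s) = 1"
  by (simp add: unit_partition_def sum_lessThan_telescope)

text \<open>The integral of \<tau> \<mapsto> \<lceil>y - \<tau>\<rceil> over [0, 1) is y; the integrand is a step function whose
  only jump is at frac y, so a Riemann sum over a partition through frac y computes it exactly.\<close>
lemma average_shifted_ceiling:
  assumes t: "unit_partition N t" and y: "frac y \<in> t ` {..<N}"
  shows "(\<Sum>s<N. (t (Suc s) - t s) * \<lceil>y - t s\<rceil>) = y"
proof -
  obtain r where r: "r < N" "t r = frac y" using y by (auto simp: image_iff)
  have ceil: "\<lceil>y - t s\<rceil> = \<lfloor>y\<rfloor> + (if s < r then 1 else 0)" if s: "s < N" for s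
  proof -
    have "t s < t r \<longleftrightarrow> s < r"
      using unit_partition_less[OF t, of s r] unit_partition_less[OF t, of r s] r s
      by (cases s r rule: linorder_cases) auto
    then show ?thesis
      using ceiling_diff_frac[of "t s" y] unit_partition_range[OF t s] r(2) by simp
  qed
  have below_r: "(\<Sum>s<N. if s < r then t (Suc s) - t s else 0) = (\<Sum>s<r. t (Suc s) - t s)"
  proof -
    have "{s\<in>{..<N}. s < r} = {..<r}" using r(1) by auto
    then show ?thesis by (simp add: sum.inter_filter[symmetric])
  qed
  have "(\<Sum>s<N. (t (Suc s) - t s) * \<lceil>y - t s\<rceil>)
      = (\<Sum>s<N. (t (Suc s) - t s) * \<lfloor>y\<rfloor> + (if s < r then t (Suc s) - t s else 0))"
    by (intro sum.cong) (simp_all add: ceil distrib_left)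
  also have "\<dots> = (\<Sum>s<N. t (Suc s) - t s) * \<lfloor>y\<rfloor> + (\<Sum>s<r. t (Suc s) - t s)"
    by (simp only: sum.distrib sum_distrib_right below_r)
  also have "\<dots> = y"
    using r(2) t unit_partition_sum_lengths[OF t]
    by (simp add: unit_partition_def sum_lessThan_telescope frac_def)
  finally show ?thesis .
qed

lemma unit_partition_through:
  fixes F :: "real set"
  assumes "finite F" "F \<subseteq> {0..<1}"
  shows "\<exists>N t. unit_partition N t \<and> F \<subseteq> t ` {..<N}"
proof -
  have "finite (insert 0 (insert 1 F))"
    using assms(1) by simp
  then obtain ts where sorted: "sorted_wrt (<) ts" and set: "set ts = insert 0 (insert 1 F)"
    by (metis finite_set_strict_sorted)
  define N where "N = length ts - 1"
  have N: "length ts = Suc N"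
    using set unfolding N_def by (cases ts) auto
  have mono: "ts ! s < ts ! r" if "s < r" "r \<le> N" for s r
    using sorted_wrt_nth_less[OF sorted] that N by simp
  have bounds: "0 \<le> ts ! s \<and> ts ! s \<le> 1" if "s \<le> N" for s
    using nth_mem[of s ts] that N set assms(2) by fastforce
  have "ts ! 0 = 0"
  proof -
    obtain i where "i < length ts" "ts ! i = 0"
      using set by (metis insertI1 in_set_conv_nth)
    then show ?thesis using mono[of 0 i] bounds[of 0] N by (cases i) auto
  qed
  moreover have "ts ! N = 1"
  proof -
    obtain i where "i < length ts" "ts ! i = 1"
      using set by (metis insertI1 insertI2 in_set_conv_nth)
    then show ?thesis using mono[of i N] bounds[of N] N by (cases "i = N") auto
  qed
  moreover have "F \<subseteq> (!) ts ` {..<N}"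
  proof
    fix y assume y: "y \<in> F"
    then obtain i where "i < length ts" "ts ! i = y"
      using set by (metis insertI2 in_set_conv_nth)
    moreover have "y < 1" using y assms(2) by auto
    ultimately show "y \<in> (!) ts ` {..<N}"
      using \<open>ts ! N = 1\<close> N by (cases "i = N") auto
  qed
  ultimately show ?thesis
    using mono unfolding unit_partition_def by blast
qed

definition threshold_round :: "(nat \<Rightarrow> real) \<Rightarrow> real \<Rightarrow> nat \<Rightarrow> int" where
  "threshold_round z \<tau> j = \<lceil>prefix_sum z j - \<tau>\<rceil> - \<lceil>prefix_sum z (j - 1) - \<tau>\<rceil>"

lemma prefix_sum_threshold_round:
  assumes "0 \<le> \<tau>" "\<tau> < 1"
  shows "prefix_sum (\<lambda>j. of_int (threshold_round z \<tau> j)) j = of_int \<lceil>prefix_sum z j - \<tau>\<rceil>"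
proof (induction j)
  case 0
  then show ?case using assms by (simp add: ceiling_eq_iff)
next
  case (Suc j)
  then show ?case by (simp add: threshold_round_def)
qed

lemma threshold_round_inQ:
  assumes cr: "circular_rep m n A l k" and z: "inQ m n A b z"
    and K: "prefix_sum z n = of_int K" and \<tau>: "0 \<le> \<tau>" "\<tau> < 1"
  shows "inQ m n A b (\<lambda>j. of_int (threshold_round z \<tau> j))"
  unfolding inQ_iff_slack_nonneg
proof
  fix r assume r: "r \<in> {1..m+n}"
  let ?Y = "prefix_sum z" and ?h = "fwd_head m n l k r" and ?t = "fwd_tail m n l k r"
  obtain c where c: "lastcol m n A r = of_int c"
    using lastcol_of_int by blast
  define e where "e = (if r \<le> m then b r else 0)"
  have e: "(if r \<le> m then real_of_int (b r) else 0) = of_int e"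
    by (simp add: e_def)
  have "0 \<le> slack m n A b z r"
    using z r unfolding inQ_iff_slack_nonneg by blast
  then have "?Y ?t - \<tau> + of_int (e - c * K) \<le> ?Y ?h - \<tau>"
    unfolding slack_eq_prefix_sums[OF cr r] c K e by simp
  then have step: "\<lceil>?Y ?t - \<tau>\<rceil> + (e - c * K) \<le> \<lceil>?Y ?h - \<tau>\<rceil>"
    by (metis ceiling_add_of_int ceiling_mono)
  have "\<lceil>?Y n - \<tau>\<rceil> = K"
    using \<tau> K by (simp add: ceiling_eq_iff)
  then have "e \<le> \<lceil>?Y ?h - \<tau>\<rceil> - \<lceil>?Y ?t - \<tau>\<rceil> + c * \<lceil>?Y n - \<tau>\<rceil>"
    using step by simp
  then have "real_of_int e \<le> of_int (\<lceil>?Y ?h - \<tau>\<rceil> - \<lceil>?Y ?t - \<tau>\<rceil> + c * \<lceil>?Y n - \<tau>\<rceil>)"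
    by (simp only: of_int_le_iff)
  then show "0 \<le> slack m n A b (\<lambda>j. of_int (threshold_round z \<tau> j)) r"
    unfolding slack_eq_prefix_sums[OF cr r] prefix_sum_threshold_round[OF \<tau>] c e
    by simp
qed

lemma inQstar_of_integral_sum:
  assumes cr: "circular_rep m n A l k" and z: "inQ m n A b z"
    and K: "prefix_sum z n = of_int K"
  shows "inQstar m n A b z"
proof -
  let ?F = "(\<lambda>j. frac (prefix_sum z j)) ` {..n}"
  have "finite ?F" "?F \<subseteq> {0..<1}"
    by (auto simp: frac_lt_1)
  then obtain N t where t: "unit_partition N t" and through: "?F \<subseteq> t ` {..<N}"
    by (metis unit_partition_through)
  note range = unit_partition_range[OF t]
  have average: "(\<Sum>s<N. (t (Suc s) - t s) * \<lceil>prefix_sum z j - t s\<rceil>) = prefix_sum z j"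
    if "j \<le> n" for j
    using through that by (intro average_shifted_ceiling[OF t]) auto
  show ?thesis
    unfolding inQstar_def
  proof (intro exI conjI allI impI ballI)
    fix s assume "s < N"
    then show "0 \<le> t (Suc s) - t s"
      and "inQ m n A b (\<lambda>j. of_int (threshold_round z (t s) j))"
      using unit_partition_less[OF t, of s "Suc s"] threshold_round_inQ[OF cr z K range] by auto
  next
    show "(\<Sum>s<N. t (Suc s) - t s) = 1"
      using unit_partition_sum_lengths[OF t] .
  next
    fix j assume j: "j \<in> {1..n}"
    have "z j = prefix_sum z j - prefix_sum z (j - 1)"
      using j prefix_sum_diff[of j z] by simp
    also have "\<dots> = (\<Sum>s<N. (t (Suc s) - t s) * of_int \<lceil>prefix_sum z j - t s\<rceil>)
        - (\<Sum>s<N. (t (Suc s) - t s) * of_int \<lceil>prefix_sum z (j - 1) - t s\<rceil>)"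
      using average[of j] average[of "j - 1"] j by fastforce
    also have "\<dots> = (\<Sum>s<N. (t (Suc s) - t s) * of_int (threshold_round z (t s) j))"
      by (simp add: threshold_round_def right_diff_distrib sum_subtractf)
    finally show "z j = (\<Sum>s<N. (t (Suc s) - t s) * of_int (threshold_round z (t s) j))" .
  qed
qed

lemma sum_lessThan_add: "(\<Sum>t<a + c. f t) = (\<Sum>t<a. f t) + (\<Sum>t<c. f (a + t))"
  for f :: "nat \<Rightarrow> 'a::comm_monoid_add"
  by (induction c) (simp_all add: add.assoc)

lemma inQstar_convex:
  assumes z1: "inQstar m n A b z1" and z2: "inQstar m n A b z2"
    and \<mu>: "0 \<le> \<mu>" "\<mu> \<le> 1"
    and x: "\<forall>j\<in>{1..n}. x j = \<mu> * z1 j + (1 - \<mu>) * z2 j"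
  shows "inQstar m n A b x"
proof -
  obtain N1 :: nat and p1 w1 where h1: "\<forall>t<N1. 0 \<le> w1 t \<and> inQ m n A b (\<lambda>j. real_of_int (p1 t j))"
    "(\<Sum>t<N1. w1 t) = 1" "\<forall>j\<in>{1..n}. z1 j = (\<Sum>t<N1. w1 t * real_of_int (p1 t j))"
    using z1 unfolding inQstar_def by blast
  obtain N2 :: nat and p2 w2 where h2: "\<forall>t<N2. 0 \<le> w2 t \<and> inQ m n A b (\<lambda>j. real_of_int (p2 t j))"
    "(\<Sum>t<N2. w2 t) = 1" "\<forall>j\<in>{1..n}. z2 j = (\<Sum>t<N2. w2 t * real_of_int (p2 t j))"
    using z2 unfolding inQstar_def by blast
  define p where "p t = (if t < N1 then p1 t else p2 (t - N1))" for t
  define w where "w t = (if t < N1 then \<mu> * w1 t else (1 - \<mu>) * w2 (t - N1))" for t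
  show ?thesis
    unfolding inQstar_def
  proof (intro exI[of _ "N1 + N2"] exI[of _ p] exI[of _ w] conjI allI impI ballI)
    fix t assume "t < N1 + N2"
    then show "0 \<le> w t" and "inQ m n A b (\<lambda>j. real_of_int (p t j))"
      using h1(1) h2(1) \<mu> by (auto simp: w_def p_def)
  next
    show "(\<Sum>t<N1 + N2. w t) = 1"
      using h1(2) h2(2) by (simp add: sum_lessThan_add w_def sum_distrib_left[symmetric])
  next
    fix j assume "j \<in> {1..n}"
    then show "x j = (\<Sum>t<N1 + N2. w t * real_of_int (p t j))"
      using x h1(3) h2(3)
      by (simp add: sum_lessThan_add w_def p_def sum_distrib_left mult.assoc)
  qed
qed

lemma potential_of_nonneg_circuits:
  fixes c :: "arc \<Rightarrow> real"
  assumes "\<forall>cs. is_circuit m n l k cs \<longrightarrow> 0 \<le> (\<Sum>a\<leftarrow>cs. c a)"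
  obtains \<phi> where "\<And>a. arc_valid m n a \<Longrightarrow> \<phi> (arc_head m n l k a) \<le> \<phi> (arc_tail m n l k a) + c a"
proof -
  let ?E = "{a. arc_valid m n a}"
  have "?E = {1..m+n} \<times> UNIV"
    by (auto simp: arc_valid_def)
  then have "finite ?E" by simp
  moreover have "nonneg_cycles (arc_tail m n l k) (arc_head m n l k) ?E c"
    unfolding nonneg_cycles_def
  proof (intro allI impI)
    fix u cs assume cs: "cs \<noteq> [] \<and> set cs \<subseteq> ?E \<and> walk (arc_tail m n l k) (arc_head m n l k) u cs u
      \<and> distinct (map (arc_tail m n l k) cs)"
    then have "is_circuit m n l k cs"
      unfolding is_circuit_def using closed_walk_nth[of _ _ u cs] by auto
    then show "0 \<le> sum_list (map c cs)" using assms by simp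
  qed
  ultimately show ?thesis
    using that by (rule potential_of_nonneg_cycles) simp
qed

definition potential_direction :: "nat \<Rightarrow> (nat \<Rightarrow> real) \<Rightarrow> nat \<Rightarrow> real" where
  "potential_direction n \<pi> j = \<pi> (j mod n) - \<pi> (j - 1) + (if j = n then 1 else 0)"

lemma prefix_sum_potential_direction:
  assumes "0 < n" "j \<le> n"
  shows "prefix_sum (potential_direction n \<pi>) j = \<pi> (j mod n) - \<pi> 0 + (if j = n then 1 else 0)"
  using assms(2)
proof (induction j)
  case (Suc j)
  then show ?case using assms(1) by (simp add: potential_direction_def)
qed (use assms in simp)

lemma slack_shift_potential_direction:
  assumes cr: "circular_rep m n A l k" and r: "r \<in> {1..m+n}"
  shows "slack m n A b (\<lambda>j. x j + c * potential_direction n \<pi> j) r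
       = slack m n A b x r + c * (\<pi> (fwd_head m n l k r) - \<pi> (fwd_tail m n l k r) + lastcol m n A r)"
proof -
  have n: "0 < n" using circular_rep_pos[OF cr r] .
  have "fwd_head m n l k r < n" "fwd_tail m n l k r < n"
    using n by (simp_all add: fwd_head_def fwd_tail_def)
  then show ?thesis
    unfolding slack_eq_prefix_sums[OF cr r] prefix_sum_add_scaled
    using n by (simp add: prefix_sum_potential_direction algebra_simps)
qed

lemma mu_range: "0 \<le> mu n x" "mu n x < 1"
  unfolding mu_def by linarith+

lemma potential_shifts_inQ:
  assumes cr: "circular_rep m n A l k" and \<mu>: "0 < mu n x"
    and \<phi>: "\<And>a. arc_valid m n a \<Longrightarrow>
      \<phi> (arc_head m n l k a) \<le> \<phi> (arc_tail m n l k a) + arc_cost m n A b x a"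
  defines "d \<equiv> potential_direction n (\<lambda>v. \<phi> v / (mu n x * (1 - mu n x)))"
  shows "inQ m n A b (\<lambda>j. x j + (mu n x - 1) * d j)" "inQ m n A b (\<lambda>j. x j + mu n x * d j)"
proof -
  let ?\<mu> = "mu n x"
  define \<pi> where "\<pi> v = \<phi> v / (?\<mu> * (1 - ?\<mu>))" for v
  have pos: "0 < ?\<mu> * (1 - ?\<mu>)" using \<mu> mu_range by simp
  then have \<phi>\<pi>: "\<phi> v = ?\<mu> * (1 - ?\<mu>) * \<pi> v" for v
    unfolding \<pi>_def by (metis less_irrefl nonzero_mult_div_cancel_left times_divide_eq_right)
  have "0 \<le> slack m n A b (\<lambda>j. x j + (?\<mu> - 1) * d j) r \<and> 0 \<le> slack m n A b (\<lambda>j. x j + ?\<mu> * d j) r"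
    if r: "r \<in> {1..m+n}" for r
  proof -
    let ?s = "slack m n A b x r" and ?v = "lastcol m n A r"
    let ?h = "fwd_head m n l k r" and ?t = "fwd_tail m n l k r"
    have arcs: "arc_valid m n (r, True)" "arc_valid m n (r, False)"
      using r by (simp_all add: arc_valid_def)
    have "\<phi> ?h \<le> \<phi> ?t + ?\<mu> * (?s - (1 - ?\<mu>) * ?v)"
      using \<phi>[OF arcs(1)] by (simp add: arc_head_def arc_tail_def arc_cost_def cplus_def)
    then have "0 \<le> ?\<mu> * (?s + (?\<mu> - 1) * (\<pi> ?h - \<pi> ?t + ?v))"
      unfolding \<phi>\<pi> by (simp add: algebra_simps)
    then have "0 \<le> ?s + (?\<mu> - 1) * (\<pi> ?h - \<pi> ?t + ?v)"
      using \<mu> by (simp add: zero_le_mult_iff)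
    moreover have "\<phi> ?t \<le> \<phi> ?h + (1 - ?\<mu>) * (?s + ?\<mu> * ?v)"
      using \<phi>[OF arcs(2)] by (simp add: arc_head_def arc_tail_def arc_cost_def cminus_def)
    then have "0 \<le> (1 - ?\<mu>) * (?s + ?\<mu> * (\<pi> ?h - \<pi> ?t + ?v))"
      unfolding \<phi>\<pi> by (simp add: algebra_simps)
    then have "0 \<le> ?s + ?\<mu> * (\<pi> ?h - \<pi> ?t + ?v)"
      using mu_range(2)[of n x] by (simp add: zero_le_mult_iff)
    ultimately show ?thesis
      unfolding d_def \<pi>_def[symmetric] slack_shift_potential_direction[OF cr r] by simp
  qed
  then show "inQ m n A b (\<lambda>j. x j + (?\<mu> - 1) * d j)" "inQ m n A b (\<lambda>j. x j + ?\<mu> * d j)"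
    unfolding inQ_iff_slack_nonneg by simp_all
qed

lemma inQstar_of_potential:
  assumes cr: "circular_rep m n A l k" and \<mu>: "0 < mu n x"
    and \<phi>: "\<And>a. arc_valid m n a \<Longrightarrow>
      \<phi> (arc_head m n l k a) \<le> \<phi> (arc_tail m n l k a) + arc_cost m n A b x a"
  shows "inQstar m n A b x"
proof -
  let ?\<mu> = "mu n x" and ?K = "\<lceil>prefix_sum x n\<rceil>"
  have \<mu>_eq: "?\<mu> = of_int ?K - prefix_sum x n"
    by (simp add: mu_def prefix_sum_def)
  then have "0 < n" using \<mu> by (cases n) auto
  define d where "d = potential_direction n (\<lambda>v. \<phi> v / (?\<mu> * (1 - ?\<mu>)))"
  have d: "prefix_sum d n = 1"
    unfolding d_def using prefix_sum_potential_direction[OF \<open>0 < n\<close> order.refl] by simp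
  have shifts: "inQ m n A b (\<lambda>j. x j + (?\<mu> - 1) * d j)" "inQ m n A b (\<lambda>j. x j + ?\<mu> * d j)"
    using potential_shifts_inQ[OF cr \<mu> \<phi>] by (simp_all add: d_def)
  have "prefix_sum (\<lambda>j. x j + (?\<mu> - 1) * d j) n = of_int (?K - 1)"
    using d \<mu>_eq by (simp add: prefix_sum_add_scaled)
  then have "inQstar m n A b (\<lambda>j. x j + (?\<mu> - 1) * d j)"
    by (rule inQstar_of_integral_sum[OF cr shifts(1)])
  moreover have "prefix_sum (\<lambda>j. x j + ?\<mu> * d j) n = of_int ?K"
    using d \<mu>_eq by (simp add: prefix_sum_add_scaled)
  then have "inQstar m n A b (\<lambda>j. x j + ?\<mu> * d j)"
    by (rule inQstar_of_integral_sum[OF cr shifts(2)])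
  ultimately show ?thesis
    by (rule inQstar_convex) (use mu_range[of n x] in \<open>auto simp: algebra_simps\<close>)
qed

theorem lemma3p5:
  fixes m n :: nat and A :: "nat \<Rightarrow> nat \<Rightarrow> int" and l k :: "nat \<Rightarrow> nat"
    and b :: "nat \<Rightarrow> int" and x :: "nat \<Rightarrow> real"
  assumes "circular_rep m n A l k"
    and "\<forall>i\<in>{1..m}. 0 \<le> b i"
    and "inQ m n A b x"
    and "\<forall>cs. is_circuit m n l k cs \<longrightarrow> 0 \<le> (\<Sum>a\<leftarrow>cs. arc_cost m n A b x a)"
  shows "inQstar m n A b x"
proof (cases "mu n x = 0")
  case True
  then have "prefix_sum x n = of_int \<lceil>prefix_sum x n\<rceil>"
    unfolding mu_def prefix_sum_def by linarith
  then show ?thesis by (rule inQstar_of_integral_sum[OF assms(1,3)])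
next
  case False
  then have "0 < mu n x" using mu_range(1)[of n x] by linarith
  moreover obtain \<phi> where "\<And>a. arc_valid m n a \<Longrightarrow>
      \<phi> (arc_head m n l k a) \<le> \<phi> (arc_tail m n l k a) + arc_cost m n A b x a"
    using potential_of_nonneg_circuits[OF assms(4)] by blast
  ultimately show ?thesis by (rule inQstar_of_potential[OF assms(1)])
qed

end
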